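(* Let $C$ be an open cone. A sequence in $C$ is an almost-geodesic for the Hilbert function $H_C$ if and only if it is an almost-geodesic both for the Funk function $F_C$ and for the reverse Funk function $RF_C$.
   Context: $V$ is a finite-dimensional real vector space. An open cone is a nonempty open convex set $C\subset V$ with $\lambda C\subseteq C$ for all $\lambda>0$ and $0\notin C$. Write $x\le_C y$ iff $y-x\in\overline C$; $M_C(y/x):=\inf\{\lambda>0:y\le_C\lambda x\}$; $F_C(y,x):=\log M_C(y/x)$; $RF_C(x,y):=F_C(y,x)$; $H_C(x,y):=F_C(x,y)+F_C(y,x)$ for $x,y\in C$ (these satisfy the triangle inequality). For $d\in\{F_C,RF_C,H_C\}$, an almost-geodesic is a sequence $(x_l)_{l\in\mathbb N}$ in $C$ such that for some $\epsilon>0$, $\sum_{i=1}^l d(x_{i-1},x_i)\le d(x_0,x_l)+\epsilon$ for all $l\ge1$. *)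

theory Defs
  imports "HOL-Analysis.Analysis"
begin

definition open_cone :: "'v::euclidean_space set \<Rightarrow> bool" where
  "open_cone C \<longleftrightarrow> C \<noteq> {} \<and> open C \<and> convex C \<and>
     (\<forall>c>0. \<forall>x\<in>C. c *\<^sub>R x \<in> C) \<and> 0 \<notin> C"

definition cone_le :: "'v::euclidean_space set \<Rightarrow> 'v \<Rightarrow> 'v \<Rightarrow> bool" where
  "cone_le C x y \<longleftrightarrow> y - x \<in> closure C"

definition M_cone :: "'v::euclidean_space set \<Rightarrow> 'v \<Rightarrow> 'v \<Rightarrow> real" where
  "M_cone C y x = Inf {c. c > 0 \<and> cone_le C y (c *\<^sub>R x)}"

definition funk :: "'v::euclidean_space set \<Rightarrow> 'v \<Rightarrow> 'v \<Rightarrow> real" where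
  "funk C y x = ln (M_cone C y x)"

definition rev_funk :: "'v::euclidean_space set \<Rightarrow> 'v \<Rightarrow> 'v \<Rightarrow> real" where
  "rev_funk C x y = funk C y x"

definition hilbert_fn :: "'v::euclidean_space set \<Rightarrow> 'v \<Rightarrow> 'v \<Rightarrow> real" where
  "hilbert_fn C x y = funk C x y + funk C y x"

definition almost_geodesic ::
  "'v::euclidean_space set \<Rightarrow> ('v \<Rightarrow> 'v \<Rightarrow> real) \<Rightarrow> (nat \<Rightarrow> 'v) \<Rightarrow> bool" where
  "almost_geodesic C d x \<longleftrightarrow> (\<forall>l. x l \<in> C) \<and>
     (\<exists>eps>0. \<forall>l\<ge>1. (\<Sum>i=1..l. d (x (i - 1)) (x i)) \<le> d (x 0) (x l) + eps)"

end

theory Submission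
  imports Defs
begin

(* H_C = F_C + RF_C, and both summands satisfy the triangle inequality on C (for F_C because
   M_C is submultiplicative, closure C being a convex cone). Hence along a sequence in C the defect
   (sum of d(x_(i-1), x_i) for i = 1..l) - d(x_0, x_l) is nonnegative for F_C and for RF_C, and the
   defect for H_C is their sum: it is bounded iff both are. *)

lemma zero_in_closure_open_cone:
  assumes "open_cone C" shows "0 \<in> closure C"
proof -
  obtain x where x: "x \<in> C" and "x \<noteq> 0" using assms by (auto simp: open_cone_def)
  have "open_segment 0 x \<subseteq> C"
    using assms x by (auto simp: open_cone_def in_segment)
  then have "closed_segment 0 x \<subseteq> closure C"
    using \<open>x \<noteq> 0\<close> by (metis closure_mono closure_open_segment)
  then show ?thesis by auto
qed

lemma convex_cone_closure_open_cone:
  assumes "open_cone C" shows "convex_cone (closure C)"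
proof -
  have "cone (insert 0 C)"
    using assms by (auto simp: open_cone_def cone_def less_eq_real_def)
  then have "cone (closure C)"
    using cone_closure zero_in_closure_open_cone[OF assms] by (metis closure_insert insert_absorb)
  then show ?thesis
    using assms by (auto simp: convex_cone_def open_cone_def cone_def conic_def)
qed

lemma open_cone_add:
  assumes "open_cone C" "u \<in> C" "v \<in> C" shows "u + v \<in> C"
proof -
  have "(1/2) *\<^sub>R (2 *\<^sub>R u) + (1/2) *\<^sub>R (2 *\<^sub>R v) \<in> C"
    using assms by (intro convexD) (auto simp: open_cone_def)
  then show ?thesis by (simp add: scaleR_add_right[symmetric])
qed

lemma open_cone_add_closure:
  assumes "open_cone C" "u \<in> C" "v \<in> closure C" shows "u + v \<in> C"
proof -
  obtain r where "r > 0" and ball: "ball u r \<subseteq> C"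
    using assms(1,2) openE by (auto simp: open_cone_def)
  then obtain w where "w \<in> C" and "dist w v < r"
    using assms(3) closure_approachable by blast
  then have "u + v - w \<in> C"
    using ball by (auto simp: dist_norm norm_minus_commute)
  with \<open>w \<in> C\<close> show ?thesis
    using open_cone_add[OF assms(1)] by fastforce
qed

lemma ex_cone_le_scaleR:
  assumes "open_cone C" "x \<in> C"
  shows "\<exists>c>0. cone_le C y (c *\<^sub>R x)"
proof -
  obtain r where "r > 0" and ball: "ball x r \<subseteq> C"
    using assms openE by (auto simp: open_cone_def)
  define c where "c = norm y / r + 1"
  have "c > 0" using \<open>r > 0\<close> by (simp add: c_def add_nonneg_pos)
  have "norm (y /\<^sub>R c) < r"
    using \<open>r > 0\<close> \<open>c > 0\<close> by (simp add: c_def field_simps)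
  then have "x - y /\<^sub>R c \<in> C"
    using ball by (auto simp: dist_norm)
  then have "c *\<^sub>R (x - y /\<^sub>R c) \<in> C"
    using assms(1) \<open>c > 0\<close> by (auto simp: open_cone_def)
  then have "c *\<^sub>R x - y \<in> closure C"
    using \<open>c > 0\<close> closure_subset by (auto simp: scaleR_diff_right)
  then show ?thesis
    using \<open>c > 0\<close> by (auto simp: cone_le_def)
qed

lemma M_cone_le:
  assumes "c > 0" "cone_le C y (c *\<^sub>R x)" shows "M_cone C y x \<le> c"
  unfolding M_cone_def using assms by (intro cInf_lower) (auto intro: bdd_belowI[where m=0])

lemma M_cone_pos:
  assumes "open_cone C" "x \<in> C" "y \<in> C"
  shows "M_cone C y x > 0"
proof -
  have "x \<noteq> 0" using assms by (auto simp: open_cone_def)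
  obtain r where "r > 0" and ball: "ball y r \<subseteq> C"
    using assms(1,3) openE by (auto simp: open_cone_def)
  have "r / norm x \<le> c" if "c > 0" "cone_le C y (c *\<^sub>R x)" for c
  proof (rule ccontr)
    assume "\<not> r / norm x \<le> c"
    then have "y - c *\<^sub>R x \<in> C"
      using ball \<open>c > 0\<close> \<open>x \<noteq> 0\<close> by (auto simp: dist_norm field_simps)
    then have "(y - c *\<^sub>R x) + (c *\<^sub>R x - y) \<in> C"
      using that(2) unfolding cone_le_def by (rule open_cone_add_closure[OF assms(1)])
    then show False using assms(1) by (simp add: open_cone_def)
  qed
  then have "r / norm x \<le> M_cone C y x"
    unfolding M_cone_def using ex_cone_le_scaleR[OF assms(1,2)] by (intro cInf_greatest) auto
  moreover have "r / norm x > 0" using \<open>r > 0\<close> \<open>x \<noteq> 0\<close> by simp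
  ultimately show ?thesis by linarith
qed

lemma cone_le_scaleR_trans:
  assumes "open_cone C" "s > 0" "cone_le C a (s *\<^sub>R b)" "cone_le C b (t *\<^sub>R c)"
  shows "cone_le C a ((s * t) *\<^sub>R c)"
proof -
  have K: "convex_cone (closure C)" using convex_cone_closure_open_cone[OF assms(1)] .
  have "s *\<^sub>R (t *\<^sub>R c - b) + (s *\<^sub>R b - a) \<in> closure C"
    using assms(2-4) by (intro convex_cone_add[OF K] convex_cone_scaleR[OF K]) (auto simp: cone_le_def)
  then show ?thesis by (simp add: cone_le_def algebra_simps)
qed

lemma M_cone_submult:
  assumes "open_cone C" "a \<in> C" "b \<in> C" "c \<in> C"
  shows "M_cone C a c \<le> M_cone C a b * M_cone C b c"
proof -
  have "M_cone C a c / t \<le> M_cone C a b" if "t > 0" "cone_le C b (t *\<^sub>R c)" for t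
    unfolding M_cone_def[of C a b]
  proof (rule cInf_greatest)
    fix s assume "s \<in> {s. s > 0 \<and> cone_le C a (s *\<^sub>R b)}"
    then have "M_cone C a c \<le> s * t"
      using that cone_le_scaleR_trans[OF assms(1)] by (intro M_cone_le) auto
    then show "M_cone C a c / t \<le> s" using \<open>t > 0\<close> by (simp add: field_simps)
  qed (use ex_cone_le_scaleR[OF assms(1,3)] in auto)
  then have "M_cone C a c / M_cone C a b \<le> M_cone C b c"
    unfolding M_cone_def[of C b c]
    using M_cone_pos[OF assms(1,3,2)] ex_cone_le_scaleR[OF assms(1,4)]
    by (intro cInf_greatest) (auto simp: field_simps)
  then show ?thesis using M_cone_pos[OF assms(1,3,2)] by (simp add: field_simps)
qed

lemma funk_triangle:
  assumes "open_cone C" "a \<in> C" "b \<in> C" "c \<in> C"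
  shows "funk C a c \<le> funk C a b + funk C b c"
proof -
  have "M_cone C a b > 0" "M_cone C b c > 0" "M_cone C a c > 0"
    using M_cone_pos assms by auto
  then have "ln (M_cone C a c) \<le> ln (M_cone C a b * M_cone C b c)"
    using M_cone_submult[OF assms] by simp
  then show ?thesis
    using \<open>M_cone C a b > 0\<close> \<open>M_cone C b c > 0\<close> by (simp add: funk_def ln_mult)
qed

definition triangle_ineq_on :: "'a set \<Rightarrow> ('a \<Rightarrow> 'a \<Rightarrow> real) \<Rightarrow> bool" where
  "triangle_ineq_on S d \<longleftrightarrow> (\<forall>a\<in>S. \<forall>b\<in>S. \<forall>c\<in>S. d a c \<le> d a b + d b c)"

lemma triangle_ineq_on_flip:
  "triangle_ineq_on S d \<Longrightarrow> triangle_ineq_on S (\<lambda>a b. d b a)"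
  unfolding triangle_ineq_on_def by (metis add.commute)

lemma triangle_ineq_on_funk: "open_cone C \<Longrightarrow> triangle_ineq_on C (funk C)"
  by (simp add: triangle_ineq_on_def funk_triangle)

lemma triangle_ineq_on_rev_funk: "open_cone C \<Longrightarrow> triangle_ineq_on C (rev_funk C)"
  using triangle_ineq_on_flip[OF triangle_ineq_on_funk] by (simp add: rev_funk_def[abs_def])

lemma triangle_ineq_on_chain:
  fixes x :: "nat \<Rightarrow> 'a"
  assumes "triangle_ineq_on S d" "\<And>i. x i \<in> S" "l \<ge> 1"
  shows "d (x 0) (x l) \<le> (\<Sum>i=1..l. d (x (i - 1)) (x i))"
  using \<open>l \<ge> 1\<close>
proof (induction l rule: dec_induct)
  case (step l)
  have "d (x 0) (x (Suc l)) \<le> d (x 0) (x l) + d (x l) (x (Suc l))"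
    using assms(1,2) by (simp add: triangle_ineq_on_def)
  with step.IH show ?case by simp
qed simp

lemma almost_geodesic_add_iff:
  assumes "triangle_ineq_on C d" "triangle_ineq_on C e"
  shows "almost_geodesic C (\<lambda>a b. d a b + e a b) x \<longleftrightarrow>
         almost_geodesic C d x \<and> almost_geodesic C e x"
proof (cases "\<forall>l. x l \<in> C")
  case True
  let ?D = "\<lambda>l. (\<Sum>i=1..l. d (x (i - 1)) (x i)) - d (x 0) (x l)"
  let ?E = "\<lambda>l. (\<Sum>i=1..l. e (x (i - 1)) (x i)) - e (x 0) (x l)"
  have nonneg: "?D l \<ge> 0" "?E l \<ge> 0" if "l \<ge> 1" for l
    using triangle_ineq_on_chain[OF assms(1)] triangle_ineq_on_chain[OF assms(2)] True that
    by auto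
  have "(\<exists>eps>0. \<forall>l\<ge>1. ?D l + ?E l \<le> eps) \<longleftrightarrow>
        (\<exists>eps>0. \<forall>l\<ge>1. ?D l \<le> eps) \<and> (\<exists>eps>0. \<forall>l\<ge>1. ?E l \<le> eps)"
  proof
    assume "\<exists>eps>0. \<forall>l\<ge>1. ?D l + ?E l \<le> eps"
    then obtain eps where "eps > 0" and bound: "\<And>l. l \<ge> 1 \<Longrightarrow> ?D l + ?E l \<le> eps"
      by blast
    have "?D l \<le> eps \<and> ?E l \<le> eps" if "l \<ge> 1" for l
      using nonneg[OF that] bound[OF that] by linarith
    with \<open>eps > 0\<close> show "(\<exists>eps>0. \<forall>l\<ge>1. ?D l \<le> eps) \<and> (\<exists>eps>0. \<forall>l\<ge>1. ?E l \<le> eps)"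
      by blast
  next
    assume "(\<exists>eps>0. \<forall>l\<ge>1. ?D l \<le> eps) \<and> (\<exists>eps>0. \<forall>l\<ge>1. ?E l \<le> eps)"
    then obtain eps1 eps2 where "eps1 > 0" "\<forall>l\<ge>1. ?D l \<le> eps1" "eps2 > 0" "\<forall>l\<ge>1. ?E l \<le> eps2"
      by blast
    then show "\<exists>eps>0. \<forall>l\<ge>1. ?D l + ?E l \<le> eps"
      by (intro exI[of _ "eps1 + eps2"]) (auto intro: add_mono)
  qed
  then show ?thesis
    using True by (simp add: almost_geodesic_def sum.distrib algebra_simps)
qed (unfold almost_geodesic_def, blast)

theorem mainTheorem11:
  fixes C :: "'v::euclidean_space set" and x :: "nat \<Rightarrow> 'v"
  assumes "open_cone C"
  shows "almost_geodesic C (hilbert_fn C) x \<longleftrightarrow>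
         almost_geodesic C (funk C) x \<and> almost_geodesic C (rev_funk C) x"
proof -
  have "hilbert_fn C = (\<lambda>a b. funk C a b + rev_funk C a b)"
    by (simp add: fun_eq_iff hilbert_fn_def rev_funk_def)
  then show ?thesis
    using almost_geodesic_add_iff[OF triangle_ineq_on_funk triangle_ineq_on_rev_funk] assms
    by simp
qed

end
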